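(* Let $(M,\pi)$ be a partial $H$-module and write $h\cdot m=\pi(h)(m)$. (a) The global core of $M$ is $$c(M)=\{m\in M : g\cdot(h\cdot m)=(gh)\cdot m \text{ for all } g,h\in H\},$$ and $c$ defines a functor ${}_H\mathcal M^{par}\to{}_H\mathcal M$ that is right adjoint to the inclusion functor $i:{}_H\mathcal M\to{}_H\mathcal M^{par}$. (b) The global shadow of $M$ is $s(M)=M/N$, where $N$ is the partial $H$-submodule of $M$ generated by all elements $h\cdot(g\cdot m)-(hg)\cdot m$ with $h,g\in H$, $m\in M$. Moreover $s$ defines a functor ${}_H\mathcal M^{par}\to{}_H\mathcal M$ that is left adjoint to $i$.
   Context: Throughout, $k$ is a field and $H$ is a Hopf algebra over $k$ with bijective antipode $S$ and Sweedler notation $\Delta(h)=h_{(1)}\otimes h_{(2)}$. A partial $H$-module is a vector space $M$ with a linear map $\pi:H\to\mathrm{End}_k(M)$ satisfying, for all $h,k\in H$: - $\pi(1_H)=\mathrm{id}$; - $\pi(h)\pi(k_{(1)})\pi(S(k_{(2)}))=\pi(hk_{(1)})\pi(S(k_{(2)}))$; - $\pi(h_{(1)})\pi(S(h_{(2)}))\pi(k)=\pi(h_{(1)})\pi(S(h_{(2)})k)$; - $\pi(h)\pi(S(k_{(1)}))\pi(k_{(2)})=\pi(hS(k_{(1)}))\pi(k_{(2)})$; - $\pi(S(h_{(1)}))\pi(h_{(2)})\pi(k)=\pi(S(h_{(1)}))\pi(h_{(2)}k)$. Morphisms of partial $H$-modules are linear maps commuting with the $\pi(h)$; they form the category ${}_H\mathcal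 M^{par}$. A partial submodule is a subspace stable under all $\pi(h)$. Every left $H$-module $M$ (action $\triangleright$) is a partial $H$-module via $\pi(h)(m)=h\triangleright m$. This gives the inclusion functor $i:{}_H\mathcal M\to{}_H\mathcal M^{par}$. A partial $H$-module is called global if $\pi$ is an algebra morphism, i.e. it lies in the image of $i$. The global core of $M$ is the largest partial submodule of $M$ that is global. The global shadow is the largest quotient of $M$ (by a partial submodule) that is global. *)

theory Defs
  imports Complex_Main
begin

text \<open>
  The base field k is a type 'k of class field; the Hopf algebra H is a type 'h of class ring_1
  (associative unital multiplication) together with a k-scalar multiplication scH making it a
  k-algebra.  Since tensor products are not available, the comultiplication is given by a
  representative: cop h is a finite list of pairs (a_i, b_i) with
  Delta(h) = sum_i a_i (x) b_i.  Equality in H (x) H (resp. H (x) H (x) H) is expressed by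
  equality under all product functionals f (x) g (resp. f (x) g (x) l), which over a field
  separates tensors.  Sweedler sums sum F(h_(1), h_(2)) for F bilinear are written swe cop F h.
\<close>

definition swe :: "('h \<Rightarrow> ('h \<times> 'h) list) \<Rightarrow> ('h \<Rightarrow> 'h \<Rightarrow> 'v::monoid_add) \<Rightarrow> 'h \<Rightarrow> 'v" where
  "swe cop F h = sum_list (map (\<lambda>(a, b). F a b) (cop h))"

definition lin_functional :: "('k::field \<Rightarrow> 'h::ab_group_add \<Rightarrow> 'h) \<Rightarrow> ('h \<Rightarrow> 'k) \<Rightarrow> bool" where
  "lin_functional scH f \<longleftrightarrow> Vector_Spaces.linear scH (*) f"

definition teq :: "('k::field \<Rightarrow> 'h::ab_group_add \<Rightarrow> 'h) \<Rightarrow> ('h \<times> 'h) list \<Rightarrow> ('h \<times> 'h) list \<Rightarrow> bool" where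
  "teq scH xs ys \<longleftrightarrow> (\<forall>f g. lin_functional scH f \<longrightarrow> lin_functional scH g \<longrightarrow>
      sum_list (map (\<lambda>(a, b). f a * g b) xs) = sum_list (map (\<lambda>(a, b). f a * g b) ys))"

definition hopf_algebra ::
  "('k::field \<Rightarrow> 'h::ring_1 \<Rightarrow> 'h) \<Rightarrow> ('h \<Rightarrow> ('h \<times> 'h) list) \<Rightarrow> ('h \<Rightarrow> 'k) \<Rightarrow> ('h \<Rightarrow> 'h) \<Rightarrow> bool" where
  "hopf_algebra scH cop eps S \<longleftrightarrow>
     \<comment> \<open>k-algebra\<close>
     vector_space scH \<and>
     (\<forall>c a b. scH c (a * b) = scH c a * b \<and> scH c (a * b) = a * scH c b) \<and>
     \<comment> \<open>comultiplication is a linear map H \<rightarrow> H (x) H\<close>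
     (\<forall>x y. teq scH (cop (x + y)) (cop x @ cop y)) \<and>
     (\<forall>c x. teq scH (cop (scH c x)) (map (\<lambda>(a, b). (scH c a, b)) (cop x))) \<and>
     \<comment> \<open>coassociativity, tested against all product functionals f (x) g (x) l\<close>
     (\<forall>f g l h. lin_functional scH f \<longrightarrow> lin_functional scH g \<longrightarrow> lin_functional scH l \<longrightarrow>
        swe cop (\<lambda>a b. swe cop (\<lambda>a1 a2. f a1 * g a2 * l b) a) h =
        swe cop (\<lambda>a b. swe cop (\<lambda>b1 b2. f a * g b1 * l b2) b) h) \<and>
     \<comment> \<open>counit: linear, and (eps (x) id) Delta = id = (id (x) eps) Delta\<close>
     lin_functional scH eps \<and>
     (\<forall>h. swe cop (\<lambda>a b. scH (eps a) b) h = h) \<and>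
     (\<forall>h. swe cop (\<lambda>a b. scH (eps b) a) h = h) \<and>
     \<comment> \<open>bialgebra: Delta and eps are algebra maps\<close>
     (\<forall>x y. teq scH (cop (x * y)) (concat (map (\<lambda>(a, b). map (\<lambda>(c, d). (a * c, b * d)) (cop y)) (cop x)))) \<and>
     teq scH (cop 1) [(1, 1)] \<and>
     (\<forall>x y. eps (x * y) = eps x * eps y) \<and> eps 1 = 1 \<and>
     \<comment> \<open>antipode: linear, convolution inverse of id, bijective\<close>
     Vector_Spaces.linear scH scH S \<and>
     (\<forall>h. swe cop (\<lambda>a b. S a * b) h = scH (eps h) 1) \<and>
     (\<forall>h. swe cop (\<lambda>a b. a * S b) h = scH (eps h) 1) \<and>
     bij S"

definition partial_module ::
  "('k::field \<Rightarrow> 'h::ring_1 \<Rightarrow> 'h) \<Rightarrow> ('h \<Rightarrow> ('h \<times> 'h) list) \<Rightarrow> ('h \<Rightarrow> 'h)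
   \<Rightarrow> ('k \<Rightarrow> 'm::ab_group_add \<Rightarrow> 'm) \<Rightarrow> ('h \<Rightarrow> 'm \<Rightarrow> 'm) \<Rightarrow> bool" where
  "partial_module scH cop S scM act \<longleftrightarrow>
     vector_space scM \<and>
     (\<forall>h. Vector_Spaces.linear scM scM (act h)) \<and>
     (\<forall>x y m. act (x + y) m = act x m + act y m) \<and>
     (\<forall>c x m. act (scH c x) m = scM c (act x m)) \<and>
     (\<forall>m. act 1 m = m) \<and>
     (\<forall>h k m. swe cop (\<lambda>k1 k2. act h (act k1 (act (S k2) m))) k
            = swe cop (\<lambda>k1 k2. act (h * k1) (act (S k2) m)) k) \<and>
     (\<forall>h k m. swe cop (\<lambda>h1 h2. act h1 (act (S h2) (act k m))) h
            = swe cop (\<lambda>h1 h2. act h1 (act (S h2 * k) m)) h) \<and>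
     (\<forall>h k m. swe cop (\<lambda>k1 k2. act h (act (S k1) (act k2 m))) k
            = swe cop (\<lambda>k1 k2. act (h * S k1) (act k2 m)) k) \<and>
     (\<forall>h k m. swe cop (\<lambda>h1 h2. act (S h1) (act h2 (act k m))) h
            = swe cop (\<lambda>h1 h2. act (S h1) (act (h2 * k) m)) h)"

text \<open>Global: act is an algebra morphism (linearity is already part of partial_module).\<close>
definition is_global :: "('h::ring_1 \<Rightarrow> 'm \<Rightarrow> 'm) \<Rightarrow> bool" where
  "is_global act \<longleftrightarrow> act 1 = id \<and> (\<forall>x y. act (x * y) = act x \<circ> act y)"

text \<open>Morphisms of partial modules: k-linear maps commuting with all act(h).  Between global
  modules these are exactly the H-module maps.\<close>
definition pmorph ::
  "('k::field \<Rightarrow> 'm::ab_group_add \<Rightarrow> 'm) \<Rightarrow> ('h \<Rightarrow> 'm \<Rightarrow> 'm)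
   \<Rightarrow> ('k \<Rightarrow> 'n::ab_group_add \<Rightarrow> 'n) \<Rightarrow> ('h \<Rightarrow> 'n \<Rightarrow> 'n) \<Rightarrow> ('m \<Rightarrow> 'n) \<Rightarrow> bool" where
  "pmorph scM act scN rho f \<longleftrightarrow> Vector_Spaces.linear scM scN f \<and> (\<forall>h m. f (act h m) = rho h (f m))"

definition psubmodule :: "('k::field \<Rightarrow> 'm::ab_group_add \<Rightarrow> 'm) \<Rightarrow> ('h \<Rightarrow> 'm \<Rightarrow> 'm) \<Rightarrow> 'm set \<Rightarrow> bool" where
  "psubmodule scM act N \<longleftrightarrow> module.subspace scM N \<and> (\<forall>h. \<forall>m\<in>N. act h m \<in> N)"

definition gen_psubmodule :: "('k::field \<Rightarrow> 'm::ab_group_add \<Rightarrow> 'm) \<Rightarrow> ('h \<Rightarrow> 'm \<Rightarrow> 'm) \<Rightarrow> 'm set \<Rightarrow> 'm set" where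
  "gen_psubmodule scM act G = \<Inter>{N. psubmodule scM act N \<and> G \<subseteq> N}"

definition core_set :: "('h::ring_1 \<Rightarrow> 'm \<Rightarrow> 'm) \<Rightarrow> 'm set" where
  "core_set act = {m. \<forall>g h. act g (act h m) = act (g * h) m}"

definition shadow_ker :: "('k::field \<Rightarrow> 'm::ab_group_add \<Rightarrow> 'm) \<Rightarrow> ('h::ring_1 \<Rightarrow> 'm \<Rightarrow> 'm) \<Rightarrow> 'm set" where
  "shadow_ker scM act = gen_psubmodule scM act {act h (act g m) - act (h * g) m | h g m. True}"

end

theory Submission
  imports Defs
begin

text \<open>Everything follows from the fact that a morphism \<open>f\<close> carries the defect
  \<open>g \<cdot> (h \<cdot> m) - (g h) \<cdot> m\<close> to the corresponding defect of \<open>f m\<close>.  Hence a morphism out of a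
  global module lands in \<open>c(M)\<close>, and an injective one with image in \<open>c(M)\<close> has a global
  domain.  Dually, the kernel of a morphism into a global module is a partial submodule
  containing all generators of \<open>N\<close>, hence contains \<open>N\<close>, and a surjective morphism killing \<open>N\<close>
  has a global codomain.\<close>

lemma partial_module_linear_action:
  assumes "partial_module scH cop S scM act"
  shows "vector_space scM" "module_hom scM scM (act h)" "act 1 = id"
  using assms Vector_Spaces.linear.axioms(3) unfolding partial_module_def by auto

lemma pmorph_action_defect:
  assumes "pmorph scM act scN rho f"
  shows "f (act g (act h m) - act (g * h) m) = rho g (rho h (f m)) - rho (g * h) (f m)"
  using assms module_hom.diff[OF Vector_Spaces.linear.axioms(3)]
  unfolding pmorph_def by metis

lemma psubmodule_iff:
  "vector_space scM \<Longrightarrow> psubmodule scM act N \<longleftrightarrow>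
     0 \<in> N \<and> (\<forall>x\<in>N. \<forall>y\<in>N. x + y \<in> N) \<and> (\<forall>c. \<forall>x\<in>N. scM c x \<in> N) \<and> (\<forall>h. \<forall>m\<in>N. act h m \<in> N)"
  unfolding psubmodule_def by (simp add: module.subspace_def module_iff_vector_space)

lemma psubmodule_gen_psubmodule:
  assumes "vector_space scM"
  shows "psubmodule scM act (gen_psubmodule scM act G)"
  unfolding gen_psubmodule_def psubmodule_iff[OF assms] by blast

lemma gen_psubmodule_least:
  "psubmodule scM act N \<Longrightarrow> G \<subseteq> N \<Longrightarrow> gen_psubmodule scM act G \<subseteq> N"
  unfolding gen_psubmodule_def by blast

lemma subset_gen_psubmodule: "G \<subseteq> gen_psubmodule scM act G"
  unfolding gen_psubmodule_def by blast

lemma psubmodule_zero: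
  assumes "vector_space scM" and hom: "\<And>h. module_hom scM scM (act h)"
  shows "psubmodule scM act {0}"
  using assms
  by (simp add: psubmodule_iff module_hom.zero[OF hom] module.scale_zero_right module_iff_vector_space)

lemma psubmodule_vimage_pmorph:
  assumes vM: "vector_space scM" and vN: "vector_space scN"
    and f: "pmorph scM act scN rho f" and P: "psubmodule scN rho P"
  shows "psubmodule scM act (f -` P)"
proof -
  have hom: "module_hom scM scN f" and comm: "\<And>h m. f (act h m) = rho h (f m)"
    using f Vector_Spaces.linear.axioms(3) unfolding pmorph_def by auto
  show ?thesis
    using P by (simp add: psubmodule_iff[OF vM] psubmodule_iff[OF vN] comm
        module_hom.zero[OF hom] module_hom.add[OF hom] module_hom.scale[OF hom])
qed

lemma psubmodule_core_set:
  assumes "vector_space scM" and hom: "\<And>h. module_hom scM scM (act h)"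
  shows "psubmodule scM act (core_set act)"
  using assms
  by (simp add: psubmodule_iff core_set_def module_hom.zero[OF hom] module_hom.add[OF hom]
      module_hom.scale[OF hom] mult.assoc)

lemma pmorph_image_core_set:
  assumes "pmorph scM act scN rho f"
  shows "f ` core_set act \<subseteq> core_set rho"
proof -
  have comm: "\<And>h m. f (act h m) = rho h (f m)"
    using assms unfolding pmorph_def by blast
  show ?thesis
    unfolding core_set_def by (auto simp flip: comm)
qed

lemma pmorph_range_subset_core_set:
  assumes "pmorph scX actX scM act f" and "is_global actX"
  shows "range f \<subseteq> core_set act"
proof -
  have "core_set actX = UNIV"
    using \<open>is_global actX\<close> unfolding is_global_def core_set_def by simp
  then show ?thesis
    using pmorph_image_core_set[OF assms(1)] by simp
qed

lemma inj_pmorph_is_global_iff_range_subset_core_set: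
  assumes "actX 1 = id" and f: "pmorph scX actX scM act f" and "inj f"
  shows "is_global actX \<longleftrightarrow> range f \<subseteq> core_set act"
proof
  show "is_global actX \<Longrightarrow> range f \<subseteq> core_set act"
    by (rule pmorph_range_subset_core_set[OF f])
  assume "range f \<subseteq> core_set act"
  moreover have "f 0 = 0"
    using f module_hom.zero[OF Vector_Spaces.linear.axioms(3)] unfolding pmorph_def by blast
  ultimately have "f (actX g (actX h x) - actX (g * h) x) = f 0" for g h x
    by (auto simp: core_set_def pmorph_action_defect[OF f])
  then have "actX g (actX h x) = actX (g * h) x" for g h x
    using \<open>inj f\<close> by (metis inj_eq eq_iff_diff_eq_0)
  then show "is_global actX"
    using \<open>actX 1 = id\<close> unfolding is_global_def by auto
qed

lemma action_defect_in_shadow_ker: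
  "act h (act g m) - act (h * g) m \<in> shadow_ker scM act"
  unfolding shadow_ker_def by (rule subsetD[OF subset_gen_psubmodule]) blast

lemma pmorph_image_shadow_ker:
  assumes vM: "vector_space scM" and vN: "vector_space scN"
    and f: "pmorph scM act scN rho f"
  shows "f ` shadow_ker scM act \<subseteq> shadow_ker scN rho"
proof -
  have "shadow_ker scM act \<subseteq> f -` shadow_ker scN rho"
    unfolding shadow_ker_def[of scM]
  proof (rule gen_psubmodule_least)
    show "psubmodule scM act (f -` shadow_ker scN rho)"
      using psubmodule_vimage_pmorph[OF vM vN f] psubmodule_gen_psubmodule[OF vN]
      unfolding shadow_ker_def by blast
    show "{act h (act g m) - act (h * g) m | h g m. True} \<subseteq> f -` shadow_ker scN rho"
      using pmorph_action_defect[OF f] action_defect_in_shadow_ker by auto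
  qed
  then show ?thesis by blast
qed

lemma shadow_ker_subset_kernel:
  assumes vM: "vector_space scM" and vY: "vector_space scY"
    and homY: "\<And>h. module_hom scY scY (actY h)"
    and f: "pmorph scM act scY actY f" and "is_global actY"
  shows "shadow_ker scM act \<subseteq> {m. f m = 0}"
proof -
  have "shadow_ker scM act \<subseteq> f -` {0}"
    unfolding shadow_ker_def
  proof (rule gen_psubmodule_least)
    show "psubmodule scM act (f -` {0})"
      by (rule psubmodule_vimage_pmorph[OF vM vY f psubmodule_zero[OF vY homY]])
    show "{act h (act g m) - act (h * g) m | h g m. True} \<subseteq> f -` {0}"
    proof
      fix x assume "x \<in> {act h (act g m) - act (h * g) m | h g m. True}"
      then obtain h g m where x: "x = act h (act g m) - act (h * g) m" by blast
      have "actY h (actY g (f m)) = actY (h * g) (f m)"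
        using \<open>is_global actY\<close> unfolding is_global_def by simp
      then show "x \<in> f -` {0}"
        by (simp add: x pmorph_action_defect[OF f])
    qed
  qed
  then show ?thesis by auto
qed

lemma surj_pmorph_is_global_iff_shadow_ker_subset_kernel:
  assumes vM: "vector_space scM" and vQ: "vector_space scQ"
    and homQ: "\<And>h. module_hom scQ scQ (actQ h)" and "actQ 1 = id"
    and q: "pmorph scM act scQ actQ q" and "surj q"
  shows "is_global actQ \<longleftrightarrow> shadow_ker scM act \<subseteq> {m. q m = 0}"
proof
  show "is_global actQ \<Longrightarrow> shadow_ker scM act \<subseteq> {m. q m = 0}"
    by (rule shadow_ker_subset_kernel[OF vM vQ homQ q])
  assume ker: "shadow_ker scM act \<subseteq> {m. q m = 0}"
  have "actQ g (actQ h (q m)) = actQ (g * h) (q m)" for g h m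
  proof -
    have "q (act g (act h m) - act (g * h) m) = 0"
      using ker action_defect_in_shadow_ker by blast
    then show ?thesis
      by (simp add: pmorph_action_defect[OF q])
  qed
  then have "actQ g (actQ h y) = actQ (g * h) y" for g h y
    using \<open>surj q\<close> by (metis surj_def)
  then show "is_global actQ"
    using \<open>actQ 1 = id\<close> unfolding is_global_def by auto
qed

theorem mainTheorem4:
  fixes scH :: "'k::field \<Rightarrow> 'h::ring_1 \<Rightarrow> 'h"
    and cop :: "'h \<Rightarrow> ('h \<times> 'h) list" and eps :: "'h \<Rightarrow> 'k" and S :: "'h \<Rightarrow> 'h"
    and scM :: "'k \<Rightarrow> 'm::ab_group_add \<Rightarrow> 'm" and act :: "'h \<Rightarrow> 'm \<Rightarrow> 'm"
  assumes H: "hopf_algebra scH cop eps S"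
    and M: "partial_module scH cop S scM act"
  shows
    \<comment> \<open>(a) c(M) is a partial submodule ...\<close>
    "psubmodule scM act (core_set act)
     \<comment> \<open>... and it is the largest global partial submodule: a partial submodule, given as the
         image of an injective morphism j : X \<rightarrow> M, is global iff it lies in c(M)\<close>
     \<and> (\<forall>(scX :: 'k \<Rightarrow> 'x::ab_group_add \<Rightarrow> 'x) actX j.
          partial_module scH cop S scX actX \<and> pmorph scX actX scM act j \<and> inj j \<longrightarrow>
          (is_global actX \<longleftrightarrow> range j \<subseteq> core_set act))
     \<comment> \<open>c is a functor: morphisms map c(M) into c(M')\<close>
     \<and> (\<forall>(scM' :: 'k \<Rightarrow> 'm2::ab_group_add \<Rightarrow> 'm2) act' f.
          partial_module scH cop S scM' act' \<and> pmorph scM act scM' act' f \<longrightarrow>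
          f ` core_set act \<subseteq> core_set act')
     \<comment> \<open>c is right adjoint to i: Hom_par(i X, M) = Hom_H(X, c(M)) for every H-module X\<close>
     \<and> (\<forall>(scX :: 'k \<Rightarrow> 'x::ab_group_add \<Rightarrow> 'x) actX.
          partial_module scH cop S scX actX \<and> is_global actX \<longrightarrow>
          {f. pmorph scX actX scM act f} = {f. pmorph scX actX scM act f \<and> range f \<subseteq> core_set act})
     \<comment> \<open>(b) N is a partial submodule ...\<close>
     \<and> psubmodule scM act (shadow_ker scM act)
     \<comment> \<open>... and M/N is the largest global quotient: a quotient of M, given as a surjective
         morphism q : M \<rightarrow> Q, is global iff N is contained in ker q\<close>
     \<and> (\<forall>(scQ :: 'k \<Rightarrow> 'q::ab_group_add \<Rightarrow> 'q) actQ q.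
          partial_module scH cop S scQ actQ \<and> pmorph scM act scQ actQ q \<and> surj q \<longrightarrow>
          (is_global actQ \<longleftrightarrow> shadow_ker scM act \<subseteq> {m. q m = 0}))
     \<comment> \<open>s is a functor: morphisms map N into N', hence induce M/N \<rightarrow> M'/N'\<close>
     \<and> (\<forall>(scM' :: 'k \<Rightarrow> 'm2::ab_group_add \<Rightarrow> 'm2) act' f.
          partial_module scH cop S scM' act' \<and> pmorph scM act scM' act' f \<longrightarrow>
          f ` shadow_ker scM act \<subseteq> shadow_ker scM' act')
     \<comment> \<open>s is left adjoint to i: Hom_par(M, i Y) = Hom_H(M/N, Y), the latter identified with the
         morphisms M \<rightarrow> Y vanishing on N\<close>
     \<and> (\<forall>(scY :: 'k \<Rightarrow> 'y::ab_group_add \<Rightarrow> 'y) actY.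
          partial_module scH cop S scY actY \<and> is_global actY \<longrightarrow>
          {f. pmorph scM act scY actY f} = {f. pmorph scM act scY actY f \<and> shadow_ker scM act \<subseteq> {m. f m = 0}})"
proof -
  note linear_action = partial_module_linear_action
  note vM = linear_action(1)[OF M] and homM = linear_action(2)[OF M]
  show ?thesis
  proof (intro conjI allI impI; (elim conjE)?)
    show "psubmodule scM act (core_set act)"
      by (rule psubmodule_core_set[OF vM homM])
    show "psubmodule scM act (shadow_ker scM act)"
      unfolding shadow_ker_def by (rule psubmodule_gen_psubmodule[OF vM])
  next
    fix scX :: "'k \<Rightarrow> 'x::ab_group_add \<Rightarrow> 'x" and actX j
    assume "partial_module scH cop S scX actX" "pmorph scX actX scM act j" "inj j"
    then show "is_global actX \<longleftrightarrow> range j \<subseteq> core_set act"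
      by (rule inj_pmorph_is_global_iff_range_subset_core_set[OF linear_action(3)])
  next
    fix scM' :: "'k \<Rightarrow> 'm2::ab_group_add \<Rightarrow> 'm2" and act' f
    assume M': "partial_module scH cop S scM' act'" and f: "pmorph scM act scM' act' f"
    show "f ` core_set act \<subseteq> core_set act'"
      by (rule pmorph_image_core_set[OF f])
    show "f ` shadow_ker scM act \<subseteq> shadow_ker scM' act'"
      by (rule pmorph_image_shadow_ker[OF vM linear_action(1)[OF M'] f])
  next
    fix scX :: "'k \<Rightarrow> 'x::ab_group_add \<Rightarrow> 'x" and actX :: "'h \<Rightarrow> 'x \<Rightarrow> 'x"
    assume "is_global actX"
    then show "{f. pmorph scX actX scM act f} = {f. pmorph scX actX scM act f \<and> range f \<subseteq> core_set act}"
      using pmorph_range_subset_core_set[of scX actX scM act] by auto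
  next
    fix scQ :: "'k \<Rightarrow> 'q::ab_group_add \<Rightarrow> 'q" and actQ q
    assume Q: "partial_module scH cop S scQ actQ" and q: "pmorph scM act scQ actQ q" "surj q"
    show "is_global actQ \<longleftrightarrow> shadow_ker scM act \<subseteq> {m. q m = 0}"
      by (rule surj_pmorph_is_global_iff_shadow_ker_subset_kernel
          [OF vM linear_action(1,2,3)[OF Q] q])
  next
    fix scY :: "'k \<Rightarrow> 'y::ab_group_add \<Rightarrow> 'y" and actY :: "'h \<Rightarrow> 'y \<Rightarrow> 'y"
    assume Y: "partial_module scH cop S scY actY" and "is_global actY"
    show "{f. pmorph scM act scY actY f}
          = {f. pmorph scM act scY actY f \<and> shadow_ker scM act \<subseteq> {m. f m = 0}}"
      using shadow_ker_subset_kernel[OF vM linear_action(1,2)[OF Y] _ \<open>is_global actY\<close>]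
      by blast
  qed
qed

end
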